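(* Let $V$ be a Lévy measure. Set $\mathcal{A}_{sym}=\emptyset$ if $V$ is symmetric and $\mathcal{A}_{sym}=\{1\}$ otherwise. Let $0<p\le q\le2$, $\mathcal{A}=\{p,q\}\cup\mathcal{A}_{sym}$, $p_{\min}=\min\mathcal{A}$, $p_{\max}=\max\mathcal{A}$, and assume $V\in\mathscr{M}(p_{\min},p_{\max})$. Let $g(\omega)=\int_{\mathbb{R}\setminus\{0\}}\left(\mathrm{e}^{\mathrm{j}\omega a}-1-\mathrm{j}\omega a\mathbb{1}_{|a|<1}\right)V(\mathrm{d}a)$. Then the functional $G(\varphi)=\int_{\mathbb{R}^d}g(\varphi(\mathbf{r}))\,\mathrm{d}\mathbf{r}$ is well defined on $L^{p_{\min}}(\mathbb{R}^d)\cap L^{p_{\max}}(\mathbb{R}^d)$ (i.e. $g\circ\varphi\in L^1$), and there exist $\kappa_1,\kappa_2\ge0$ such that for all $\varphi,\psi\in L^{p_{\min}}\cap L^{p_{\max}}$, $$|G(\varphi)-G(\psi)|\le\kappa_1H_{p_{\min}}(\varphi,\psi)+\kappa_2H_{p_{\max}}(\varphi,\psi),$$ where $H_r(\varphi,\psi)=\sqrt{(\|\varphi\|_r^r+\|\psi\|_r^r)\|\varphi-\psi\|_r^r}$ and $\|\varphi\|_r^r=\int_{\mathbb{R}^d}|\varphi|^r$.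
   Context: A Lévy measure is a Radon measure $V$ on $\mathbb{R}\setminus\{0\}$ with $\int\min(1,a^2)V(\mathrm{d}a)<\infty$; it is symmetric if $V(B)=V(-B)$ for all Borel $B$. $\mathscr{M}(p,q)$ is the set of Radon measures $V$ on $\mathbb{R}\setminus\{0\}$ with $\int_{0<|a|<1}|a|^qV(\mathrm{d}a)<\infty$ and $\int_{|a|\ge1}|a|^pV(\mathrm{d}a)<\infty$. Functions are real-valued. *)

theory Defs
  imports "HOL-Analysis.Analysis"
begin

text \<open>Measures on R minus 0 are modelled as Borel measures on the reals giving no mass to 0.\<close>

definition radon_punctured :: "real measure \<Rightarrow> bool" where
  "radon_punctured V \<longleftrightarrow> sets V = sets borel \<and> emeasure V {0} = 0 \<and>
     (\<forall>K. compact K \<and> K \<subseteq> - {0} \<longrightarrow> emeasure V K < \<infinity>)"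

definition levy_measure :: "real measure \<Rightarrow> bool" where
  "levy_measure V \<longleftrightarrow> radon_punctured V \<and>
     (\<integral>\<^sup>+ a. ennreal (min 1 (a\<^sup>2)) \<partial>V) < \<infinity>"

definition symmetric_measure :: "real measure \<Rightarrow> bool" where
  "symmetric_measure V \<longleftrightarrow> (\<forall>B \<in> sets borel. emeasure V B = emeasure V (uminus ` B))"

definition M_class :: "real \<Rightarrow> real \<Rightarrow> real measure set" where
  "M_class p q = {V. radon_punctured V \<and>
     (\<integral>\<^sup>+ a. ennreal (indicator {a. 0 < \<bar>a\<bar> \<and> \<bar>a\<bar> < 1} a * \<bar>a\<bar> powr q) \<partial>V) < \<infinity> \<and>
     (\<integral>\<^sup>+ a. ennreal (indicator {a. 1 \<le> \<bar>a\<bar>} a * \<bar>a\<bar> powr p) \<partial>V) < \<infinity>}"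

definition levy_exponent :: "real measure \<Rightarrow> real \<Rightarrow> complex" where
  "levy_exponent V \<omega> = (LINT a|V. cis (\<omega> * a) - 1
      - \<i> * complex_of_real (\<omega> * a * indicator {a. \<bar>a\<bar> < 1} a))"

definition Lp_space :: "real \<Rightarrow> ('a::euclidean_space \<Rightarrow> real) set" where
  "Lp_space r = {f. f \<in> borel_measurable lebesgue \<and> integrable lebesgue (\<lambda>x. \<bar>f x\<bar> powr r)}"

definition Lp_norm_pow :: "real \<Rightarrow> ('a::euclidean_space \<Rightarrow> real) \<Rightarrow> real" where
  "Lp_norm_pow r f = (LINT x|lebesgue. \<bar>f x\<bar> powr r)"

definition H_dist :: "real \<Rightarrow> ('a::euclidean_space \<Rightarrow> real) \<Rightarrow> ('a \<Rightarrow> real) \<Rightarrow> real" where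
  "H_dist r \<phi> \<psi> = sqrt ((Lp_norm_pow r \<phi> + Lp_norm_pow r \<psi>) * Lp_norm_pow r (\<lambda>x. \<phi> x - \<psi> x))"

definition G_functional :: "real measure \<Rightarrow> ('a::euclidean_space \<Rightarrow> real) \<Rightarrow> complex" where
  "G_functional V \<phi> = (LINT x|lebesgue. levy_exponent V (\<phi> x))"

end

theory Submission
  imports Defs "HOL-Probability.Characteristic_Functions"
begin

text \<open>
  Write \<open>g \<omega> = \<integral> k \<omega> a dV(a)\<close> (\<open>k\<close> is \<open>levy_kernel\<close>) and
  \<open>m_r(x, y) = (|x| + |y|)^(r/2) |x - y|^(r/2)\<close> (\<open>mixed_powr\<close>). Elementary
  bounds for \<open>e^(it)\<close>, interpolated between their linear or quadratic regime and their bounded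
  regime, give \<open>|k x a - k y a| \<le> 4 |a|^r m_r(x, y)\<close> with \<open>r = p_max\<close> for \<open>|a| < 1\<close> and
  \<open>r = p_min\<close> for \<open>|a| \<ge> 1\<close>. Because of the compensator this needs \<open>p_min \<le> 1 \<le> p_max\<close>; for a
  symmetric \<open>V\<close> the odd part of \<open>k\<close> integrates to zero, only \<open>cos (\<omega> a) - 1\<close> remains, and
  the bound holds for all exponents. Integrating against \<open>V\<close> bounds \<open>|g x - g y|\<close> by the
  moments of \<open>V\<close> times \<open>m_p_max(x, y)\<close> and \<open>m_p_min(x, y)\<close>; the case \<open>y = 0\<close> gives
  integrability of \<open>g \<circ> \<phi>\<close>, and Cauchy--Schwarz bounds \<open>\<integral> m_r(\<phi>, \<psi>)\<close> by \<open>2 H_r(\<phi>, \<psi>)\<close>.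
\<close>

lemma norm_cis_minus_one_le: "cmod (cis t - 1) \<le> 2" "cmod (cis t - 1) \<le> \<bar>t\<bar>"
  using iexp_approx1[of t 0] iexp_approx2[of t 0] by (simp_all add: cis_conv_exp)

lemma norm_cis_minus_one_minus_linear_le:
  "cmod (cis t - 1 - \<i> * t) \<le> t\<^sup>2 / 2" "cmod (cis t - 1 - \<i> * t) \<le> 2 * \<bar>t\<bar>"
  using iexp_approx1[of t 1] iexp_approx2[of t 1]
  by (simp_all add: cis_conv_exp diff_diff_eq power2_eq_square)

lemma norm_cis_diff_le: "cmod (cis u - cis v) \<le> 2 * min 1 \<bar>u - v\<bar>"
proof -
  have "cis u - cis v = cis v * (cis (u - v) - 1)"
    by (simp add: algebra_simps cis_mult)
  then have "cmod (cis u - cis v) = cmod (cis (u - v) - 1)"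
    by (simp add: norm_mult)
  then show ?thesis
    using norm_cis_minus_one_le[of "u - v"] by (smt (verit))
qed

lemma min_one_le_powr:
  fixes z b :: real assumes "0 \<le> z" "0 \<le> b" "b \<le> 1"
  shows "min 1 z \<le> z powr b"
proof (cases "z \<le> 1")
  case True
  show ?thesis
  proof (cases "z = 0")
    case False
    then have "z powr 1 \<le> z powr b" using True assms by (intro powr_mono') auto
    then show ?thesis using True assms by simp
  qed simp
qed (use assms ge_one_powr_ge_zero in auto)

definition mixed_powr :: "real \<Rightarrow> real \<Rightarrow> real \<Rightarrow> real" where
  "mixed_powr r x y = (\<bar>x\<bar> + \<bar>y\<bar>) powr (r / 2) * \<bar>x - y\<bar> powr (r / 2)"

lemma mixed_powr_nonneg: "0 \<le> mixed_powr r x y"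
  by (simp add: mixed_powr_def)

lemma mixed_powr_mult_right: "mixed_powr r (x * a) (y * a) = \<bar>a\<bar> powr r * mixed_powr r x y"
proof -
  have "mixed_powr r (x * a) (y * a) = ((\<bar>x\<bar> + \<bar>y\<bar>) * \<bar>a\<bar>) powr (r/2) * (\<bar>x - y\<bar> * \<bar>a\<bar>) powr (r/2)"
    by (simp add: mixed_powr_def abs_mult distrib_right flip: left_diff_distrib)
  also have "\<dots> = (\<bar>a\<bar> powr (r/2) * \<bar>a\<bar> powr (r/2)) * mixed_powr r x y"
    by (simp add: mixed_powr_def powr_mult)
  finally show ?thesis by (simp flip: powr_add)
qed

lemma mixed_powr_right_zero: "mixed_powr r x 0 = \<bar>x\<bar> powr r"
  by (simp add: mixed_powr_def flip: powr_add)

lemma continuous_mixed_powr: "0 < r \<Longrightarrow> continuous_on UNIV (\<lambda>y. mixed_powr r y x)"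
  unfolding mixed_powr_def by (intro continuous_intros continuous_on_powr') auto

lemma mixed_powr_eq_sqrt: "mixed_powr r x y = sqrt ((\<bar>x\<bar> + \<bar>y\<bar>) powr r) * sqrt (\<bar>x - y\<bar> powr r)"
  by (simp add: mixed_powr_def powr_half_sqrt_powr)

lemma powr_abs_add_le:
  fixes r x y :: real assumes "0 \<le> r" "r \<le> 2"
  shows "(\<bar>x\<bar> + \<bar>y\<bar>) powr r \<le> 4 * (\<bar>x\<bar> powr r + \<bar>y\<bar> powr r)"
proof -
  define m where "m = max \<bar>x\<bar> \<bar>y\<bar>"
  have "(\<bar>x\<bar> + \<bar>y\<bar>) powr r \<le> (2 * m) powr r"
    unfolding m_def using assms by (intro powr_mono2) auto
  also have "\<dots> = 2 powr r * m powr r" by (simp add: powr_mult m_def)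
  also have "\<dots> \<le> 2 powr 2 * m powr r"
    using assms by (intro mult_right_mono powr_mono) auto
  also have "m powr r \<le> \<bar>x\<bar> powr r + \<bar>y\<bar> powr r" by (auto simp: m_def max_def)
  finally show ?thesis by simp
qed

lemma norm_cis_diff_le_mixed_powr:
  assumes "0 \<le> r" "r \<le> 1"
  shows "cmod (cis u - cis v) \<le> 2 * mixed_powr r u v"
proof -
  define s t where "s = \<bar>u - v\<bar>" and "t = \<bar>u\<bar> + \<bar>v\<bar>"
  have "cmod (cis u - cis v) \<le> 2 * min 1 s" unfolding s_def by (rule norm_cis_diff_le)
  also have "min 1 s \<le> s powr r" using min_one_le_powr[of s r] assms by (simp add: s_def)
  also have "s powr r = s powr (r/2) * s powr (r/2)" by (simp flip: powr_add)
  also have "\<dots> \<le> t powr (r/2) * s powr (r/2)"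
    using assms by (intro mult_right_mono powr_mono2) (auto simp: s_def t_def)
  finally show ?thesis by (simp add: mixed_powr_def s_def t_def)
qed

lemma mult_min_one_le_powr:
  fixes s t r :: real assumes "0 \<le> s" "s \<le> t" "1 \<le> r" "r \<le> 2"
  shows "s * min 1 t \<le> t powr (r/2) * s powr (r/2)"
proof (cases "s = 0")
  case False
  then have s: "0 < s" and t: "0 < t" using assms by auto
  have "s * min 1 t \<le> s * t powr (r - 1)"
    using min_one_le_powr[of t "r - 1"] s t assms by (intro mult_left_mono) auto
  also have "s * t powr (r - 1) = s powr (r/2) * s powr (1 - r/2) * t powr (r - 1)"
    using s by (simp flip: powr_add)
  also have "\<dots> \<le> s powr (r/2) * t powr (1 - r/2) * t powr (r - 1)"
    using s assms by (intro mult_right_mono mult_left_mono powr_mono2) auto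
  also have "\<dots> = t powr (r/2) * s powr (r/2)"
    by (simp add: mult.assoc mult.commute flip: powr_add)
  finally show ?thesis .
qed simp

lemma norm_cis_diff_minus_linear_le_mixed_powr:
  assumes "1 \<le> r" "r \<le> 2"
  shows "cmod (cis u - cis v - \<i> * (u - v)) \<le> 4 * mixed_powr r u v"
proof -
  define w s t where "w = u - v" and "s = \<bar>u - v\<bar>" and "t = \<bar>u\<bar> + \<bar>v\<bar>"
  have ws: "\<bar>w\<bar> = s" and st: "0 \<le> s" "s \<le> t" "\<bar>v\<bar> \<le> t"
    by (auto simp: w_def s_def t_def)
  have quadratic: "cmod (cis w - 1 - \<i> * w) \<le> 2 * \<bar>w\<bar> * min 1 \<bar>w\<bar>"
  proof (cases "\<bar>w\<bar> \<le> 1")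
    case True
    then have "w\<^sup>2 / 2 \<le> 2 * \<bar>w\<bar> * \<bar>w\<bar>" by (simp add: power2_eq_square abs_mult_self_eq)
    then show ?thesis using norm_cis_minus_one_minus_linear_le(1)[of w] True by simp
  qed (use norm_cis_minus_one_minus_linear_le(2)[of w] in simp)
  have "cis u - cis v - \<i> * (u - v) = cis v * (cis w - 1 - \<i> * w) + \<i> * w * (cis v - 1)"
    by (simp add: w_def algebra_simps cis_mult)
  then have "cmod (cis u - cis v - \<i> * (u - v)) \<le> cmod (cis w - 1 - \<i> * w) + \<bar>w\<bar> * cmod (cis v - 1)"
    by (metis norm_triangle_ineq norm_cis norm_ii norm_mult norm_of_real mult_1 mult_1_right)
  also have "\<dots> \<le> 2 * \<bar>w\<bar> * min 1 \<bar>w\<bar> + \<bar>w\<bar> * (2 * min 1 \<bar>v\<bar>)"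
    using quadratic norm_cis_minus_one_le[of v] by (intro add_mono mult_left_mono) auto
  also have "\<dots> \<le> 2 * \<bar>w\<bar> * min 1 t + \<bar>w\<bar> * (2 * min 1 t)"
    using ws st by (intro add_mono mult_left_mono) auto
  also have "\<dots> = 4 * (s * min 1 t)"
    using ws by simp
  also have "\<dots> \<le> 4 * mixed_powr r u v"
    using mult_min_one_le_powr[OF st(1,2) assms] by (simp add: mixed_powr_def s_def t_def)
  finally show ?thesis .
qed

lemma abs_cos_diff_le_mixed_powr:
  assumes "0 \<le> r" "r \<le> 2"
  shows "\<bar>cos u - cos v\<bar> \<le> 2 * mixed_powr r u v"
proof -
  define s t where "s = \<bar>u - v\<bar>" and "t = \<bar>u\<bar> + \<bar>v\<bar>"
  have sin_le: "\<bar>sin (z / 2)\<bar> \<le> min 1 b" if "\<bar>z\<bar> \<le> b" for z b :: real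
    using abs_sin_le_one[of "z/2"] abs_sin_x_le_abs_x[of "z/2"] that by simp
  have "\<bar>cos u - cos v\<bar> = 2 * (\<bar>sin ((u + v) / 2)\<bar> * \<bar>sin ((v - u) / 2)\<bar>)"
    by (simp add: cos_diff_cos abs_mult)
  also have "\<dots> \<le> 2 * (min 1 t * min 1 s)"
    using sin_le[of "u + v" t] sin_le[of "v - u" s]
    by (intro mult_left_mono mult_mono) (auto simp: s_def t_def)
  also have "\<dots> \<le> 2 * (t powr (r/2) * s powr (r/2))"
    using assms min_one_le_powr[of t "r/2"] min_one_le_powr[of s "r/2"]
    by (intro mult_left_mono mult_mono) (auto simp: s_def t_def)
  finally show ?thesis by (simp add: mixed_powr_def s_def t_def)
qed

section \<open>The compensated jump kernel\<close>

definition levy_kernel :: "real \<Rightarrow> real \<Rightarrow> complex" where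
  "levy_kernel \<omega> a = cis (\<omega> * a) - 1 - \<i> * complex_of_real (\<omega> * a * indicator {a. \<bar>a\<bar> < 1} a)"

lemma levy_exponent_eq_integral_kernel: "levy_exponent V \<omega> = (LINT a|V. levy_kernel \<omega> a)"
  by (simp add: levy_exponent_def levy_kernel_def)

lemma borel_measurable_levy_kernel: "levy_kernel \<omega> \<in> borel_measurable borel"
proof -
  have "{a::real. \<bar>a\<bar> < 1} \<in> sets borel"
    by (intro borel_open open_Collect_less continuous_intros)
  then have "(\<lambda>a. \<i> * complex_of_real (\<omega> * a * indicator {a. \<bar>a\<bar> < 1} a)) \<in> borel_measurable borel"
    by measurable
  moreover have "(\<lambda>a. cis (\<omega> * a) - 1) \<in> borel_measurable borel"
    by (intro borel_measurable_continuous_onI continuous_intros)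
  ultimately show ?thesis
    unfolding levy_kernel_def by (rule borel_measurable_diff[rotated])
qed

lemma levy_kernel_add_reflect:
  "levy_kernel \<omega> a + levy_kernel \<omega> (- a) = complex_of_real (2 * (cos (\<omega> * a) - 1))"
  by (simp add: levy_kernel_def complex_eq_iff indicator_def cis.sel)

lemma norm_levy_kernel_le:
  fixes r1 r2 :: real
  assumes "0 \<le> r1" "r2 \<le> 2"
  shows "cmod (levy_kernel \<omega> a) \<le> (\<omega>\<^sup>2 + 2) * (indicator {a. \<bar>a\<bar> < 1} a * \<bar>a\<bar> powr r2
            + indicator {a. 1 \<le> \<bar>a\<bar>} a * \<bar>a\<bar> powr r1)"
proof (cases "\<bar>a\<bar> < 1")
  case True
  have "cmod (levy_kernel \<omega> a) \<le> (\<omega> * a)\<^sup>2 / 2"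
    using True norm_cis_minus_one_minus_linear_le(1)[of "\<omega> * a"] by (simp add: levy_kernel_def)
  also have "\<dots> \<le> \<omega>\<^sup>2 * \<bar>a\<bar> powr 2" by (simp add: power_mult_distrib)
  also have "\<dots> \<le> (\<omega>\<^sup>2 + 2) * \<bar>a\<bar> powr r2"
    using True assms powr_mono'[of r2 2 "\<bar>a\<bar>"] by (intro mult_mono) auto
  finally show ?thesis using True by simp
next
  case False
  have "cmod (levy_kernel \<omega> a) \<le> 2"
    using False norm_cis_minus_one_le(1)[of "\<omega> * a"] by (simp add: levy_kernel_def)
  also have "\<dots> \<le> (\<omega>\<^sup>2 + 2) * \<bar>a\<bar> powr r1"
    using False assms ge_one_powr_ge_zero[of "\<bar>a\<bar>" r1] mult_mono[of 2 "\<omega>\<^sup>2 + 2" 1 "\<bar>a\<bar> powr r1"]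
    by auto
  finally show ?thesis using False by simp
qed

definition kernel_majorant :: "real \<Rightarrow> real \<Rightarrow> real \<Rightarrow> real \<Rightarrow> real \<Rightarrow> real" where
  "kernel_majorant r1 r2 x y a = 4 * (indicator {a. \<bar>a\<bar> < 1} a * mixed_powr r2 (x * a) (y * a)
     + indicator {a. 1 \<le> \<bar>a\<bar>} a * mixed_powr r1 (x * a) (y * a))"

lemma norm_levy_kernel_diff_le:
  assumes "0 \<le> r1" "r1 \<le> 1" "1 \<le> r2" "r2 \<le> 2"
  shows "cmod (levy_kernel x a - levy_kernel y a) \<le> kernel_majorant r1 r2 x y a"
proof (cases "\<bar>a\<bar> < 1")
  case True
  then have "levy_kernel x a - levy_kernel y a = cis (x * a) - cis (y * a) - \<i> * (x * a - y * a)"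
    by (simp add: levy_kernel_def algebra_simps)
  then show ?thesis
    using True norm_cis_diff_minus_linear_le_mixed_powr[OF assms(3,4), of "x * a" "y * a"]
    by (simp add: kernel_majorant_def)
next
  case False
  then have "levy_kernel x a - levy_kernel y a = cis (x * a) - cis (y * a)"
    by (simp add: levy_kernel_def)
  then show ?thesis
    using False norm_cis_diff_le_mixed_powr[OF assms(1,2), of "x * a" "y * a"]
      mixed_powr_nonneg[of r1 "x * a" "y * a"]
    by (simp add: kernel_majorant_def)
qed

lemma abs_cos_diff_le_kernel_majorant:
  assumes "0 \<le> r1" "r1 \<le> 2" "0 \<le> r2" "r2 \<le> 2"
  shows "\<bar>cos (x * a) - cos (y * a)\<bar> \<le> kernel_majorant r1 r2 x y a"
proof (cases "\<bar>a\<bar> < 1")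
  case True
  then show ?thesis
    using abs_cos_diff_le_mixed_powr[OF assms(3,4), of "x * a" "y * a"]
      mixed_powr_nonneg[of r2 "x * a" "y * a"]
    by (simp add: kernel_majorant_def)
next
  case False
  then show ?thesis
    using abs_cos_diff_le_mixed_powr[OF assms(1,2), of "x * a" "y * a"]
      mixed_powr_nonneg[of r1 "x * a" "y * a"]
    by (simp add: kernel_majorant_def)
qed

lemma distr_uminus_symmetric_measure:
  fixes V :: "real measure"
  assumes "symmetric_measure V" and sets_V: "sets V = sets borel"
  shows "distr V borel uminus = V"
proof (rule measure_eqI)
  show "sets (distr V borel uminus) = sets V" using sets_V by simp
  fix B assume "B \<in> sets (distr V borel uminus)"
  then have B: "B \<in> sets borel" by simp
  have uminus_meas: "uminus \<in> measurable V borel"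
    unfolding measurable_cong_sets[OF sets_V refl] by simp
  have "uminus -` B \<inter> space V = uminus ` B"
    using sets_eq_imp_space_eq[OF sets_V] by force
  then have "emeasure (distr V borel uminus) B = emeasure V (uminus ` B)"
    using emeasure_distr[OF uminus_meas B] by simp
  also have "\<dots> = emeasure V B"
    using assms(1) B by (simp add: symmetric_measure_def)
  finally show "emeasure (distr V borel uminus) B = emeasure V B" .
qed

lemma integral_reflect_symmetric_measure:
  fixes V :: "real measure" and f :: "real \<Rightarrow> 'b::{banach, second_countable_topology}"
  assumes "symmetric_measure V" and sets_V: "sets V = sets borel" and "f \<in> borel_measurable borel"
  shows "(LINT a|V. f (- a)) = (LINT a|V. f a)"
proof -
  have "(LINT a|V. f a) = integral\<^sup>L (distr V borel uminus) f"
    using distr_uminus_symmetric_measure[OF assms(1) sets_V] by simp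
  also have "\<dots> = (LINT a|V. f (- a))"
    by (rule integral_distr) (simp_all add: measurable_cong_sets[OF sets_V refl] assms(3))
  finally show ?thesis by simp
qed

section \<open>Cauchy--Schwarz and the distance \<open>H_dist\<close>\<close>

lemma integral_sqrt_mult_le:
  fixes f g :: "'a \<Rightarrow> real"
  assumes f: "integrable M f" "\<And>x. 0 \<le> f x" and g: "integrable M g" "\<And>x. 0 \<le> g x"
  shows "integrable M (\<lambda>x. sqrt (f x) * sqrt (g x))"
    and "(\<integral>x. sqrt (f x) * sqrt (g x) \<partial>M) \<le> sqrt (integral\<^sup>L M f) * sqrt (integral\<^sup>L M g)"
proof -
  have [measurable]: "f \<in> borel_measurable M" "g \<in> borel_measurable M"
    using f g by auto
  have amgm: "sqrt (f x) * sqrt (g x) \<le> (f x + g x) / 2" for x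
    using arith_geo_mean_sqrt[OF f(2) g(2), of x] by (simp add: real_sqrt_mult)
  show int: "integrable M (\<lambda>x. sqrt (f x) * sqrt (g x))"
    by (rule Bochner_Integration.integrable_bound[of _ "\<lambda>x. (f x + g x) / 2"])
       (use f g amgm in auto)
  define I where "I = (\<integral>x. sqrt (f x) * sqrt (g x) \<partial>M)"
  have "ennreal (I\<^sup>2) = (\<integral>\<^sup>+x. ennreal (sqrt (f x)) * ennreal (sqrt (g x)) \<partial>M)\<^sup>2"
    unfolding I_def using int f g
    by (simp add: nn_integral_eq_integral ennreal_power integral_nonneg_AE flip: ennreal_mult)
  also have "\<dots> \<le> (\<integral>\<^sup>+x. ennreal (sqrt (f x)) ^ 2 \<partial>M) * (\<integral>\<^sup>+x. ennreal (sqrt (g x)) ^ 2 \<partial>M)"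
    by (rule Cauchy_Schwarz_nn_integral) auto
  also have "\<dots> = ennreal (integral\<^sup>L M f * integral\<^sup>L M g)"
    using f g by (simp add: nn_integral_eq_integral integral_nonneg_AE ennreal_mult ennreal_power)
  finally have "I\<^sup>2 \<le> integral\<^sup>L M f * integral\<^sup>L M g"
    using f g by (simp add: integral_nonneg_AE)
  then show "I \<le> sqrt (integral\<^sup>L M f) * sqrt (integral\<^sup>L M g)"
    by (metis real_le_rsqrt real_sqrt_mult)
qed

lemma integral_mixed_powr_le_H_dist:
  fixes \<phi> \<psi> :: "'a::euclidean_space \<Rightarrow> real"
  assumes "\<phi> \<in> Lp_space r" "\<psi> \<in> Lp_space r" "0 < r" "r \<le> 2"
  shows "integrable lebesgue (\<lambda>x. mixed_powr r (\<phi> x) (\<psi> x))"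
    and "(LINT x|lebesgue. mixed_powr r (\<phi> x) (\<psi> x)) \<le> 2 * H_dist r \<phi> \<psi>"
proof -
  have [measurable]: "\<phi> \<in> borel_measurable lebesgue" "\<psi> \<in> borel_measurable lebesgue"
    and int_\<phi>: "integrable lebesgue (\<lambda>x. \<bar>\<phi> x\<bar> powr r)"
    and int_\<psi>: "integrable lebesgue (\<lambda>x. \<bar>\<psi> x\<bar> powr r)"
    using assms(1,2) by (auto simp: Lp_space_def)
  define S where "S x = 4 * (\<bar>\<phi> x\<bar> powr r + \<bar>\<psi> x\<bar> powr r)" for x
  define F where "F x = (\<bar>\<phi> x\<bar> + \<bar>\<psi> x\<bar>) powr r" for x
  define D where "D x = \<bar>\<phi> x - \<psi> x\<bar> powr r" for x
  have F_le: "F x \<le> S x" for x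
    unfolding F_def S_def using powr_abs_add_le assms(3,4) by simp
  have D_le: "D x \<le> F x" for x
    unfolding D_def F_def using assms(3) by (intro powr_mono2) (auto simp: abs_triangle_ineq4)
  have int_S: "integrable lebesgue S"
    unfolding S_def using int_\<phi> int_\<psi> by simp
  have F_meas: "F \<in> borel_measurable lebesgue" unfolding F_def by measurable
  have D_meas: "D \<in> borel_measurable lebesgue" unfolding D_def by measurable
  have int_F: "integrable lebesgue F"
    by (rule Bochner_Integration.integrable_bound[OF int_S F_meas])
       (use F_le in \<open>auto simp: F_def S_def\<close>)
  have int_D: "integrable lebesgue D"
    by (rule Bochner_Integration.integrable_bound[OF int_F D_meas])
       (use D_le in \<open>auto simp: D_def F_def\<close>)
  have mixed_eq: "mixed_powr r (\<phi> x) (\<psi> x) = sqrt (F x) * sqrt (D x)" for x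
    by (simp add: mixed_powr_eq_sqrt F_def D_def)
  show "integrable lebesgue (\<lambda>x. mixed_powr r (\<phi> x) (\<psi> x))"
    unfolding mixed_eq by (rule integral_sqrt_mult_le(1)[OF int_F _ int_D]) (auto simp: F_def D_def)
  have "(LINT x|lebesgue. mixed_powr r (\<phi> x) (\<psi> x)) \<le> sqrt (integral\<^sup>L lebesgue F) * sqrt (integral\<^sup>L lebesgue D)"
    unfolding mixed_eq by (rule integral_sqrt_mult_le(2)[OF int_F _ int_D]) (auto simp: F_def D_def)
  also have "\<dots> \<le> sqrt (integral\<^sup>L lebesgue S) * sqrt (integral\<^sup>L lebesgue D)"
    using int_F int_S F_le
    by (intro mult_right_mono real_sqrt_le_mono integral_mono) (auto simp: D_def)
  also have "integral\<^sup>L lebesgue S = 4 * (Lp_norm_pow r \<phi> + Lp_norm_pow r \<psi>)"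
    unfolding S_def Lp_norm_pow_def using int_\<phi> int_\<psi> by simp
  also have "integral\<^sup>L lebesgue D = Lp_norm_pow r (\<lambda>x. \<phi> x - \<psi> x)"
    by (simp add: D_def[abs_def] Lp_norm_pow_def)
  also have "sqrt (4 * (Lp_norm_pow r \<phi> + Lp_norm_pow r \<psi>)) * sqrt \<dots> = 2 * H_dist r \<phi> \<psi>"
    unfolding H_dist_def real_sqrt_mult by simp
  finally show "(LINT x|lebesgue. mixed_powr r (\<phi> x) (\<psi> x)) \<le> 2 * H_dist r \<phi> \<psi>" .
qed

section \<open>The L\'evy exponent under moment conditions\<close>

locale levy_moment_bounds =
  fixes V :: "real measure" and r1 r2 :: real
  assumes sets_V: "sets V = sets borel"
    and integrable_small_moment: "integrable V (\<lambda>a. indicator {a. \<bar>a\<bar> < 1} a * \<bar>a\<bar> powr r2)"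
    and integrable_large_moment: "integrable V (\<lambda>a. indicator {a. 1 \<le> \<bar>a\<bar>} a * \<bar>a\<bar> powr r1)"
    and exponents: "0 < r1" "r1 \<le> r2" "r2 \<le> 2"
    and symmetric_or_straddles_one: "symmetric_measure V \<or> (r1 \<le> 1 \<and> 1 \<le> r2)"
begin

definition small_moment :: real where
  "small_moment = (LINT a|V. indicator {a. \<bar>a\<bar> < 1} a * \<bar>a\<bar> powr r2)"

definition large_moment :: real where
  "large_moment = (LINT a|V. indicator {a. 1 \<le> \<bar>a\<bar>} a * \<bar>a\<bar> powr r1)"

lemma moments_nonneg: "0 \<le> small_moment" "0 \<le> large_moment"
  unfolding small_moment_def large_moment_def by (auto intro!: integral_nonneg_AE)

lemma borel_measurable_V: "f \<in> borel_measurable borel \<Longrightarrow> f \<in> borel_measurable V"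
  by (subst measurable_cong_sets[OF sets_V refl])

lemma integrable_levy_kernel:
  "integrable V (levy_kernel \<omega>)" "integrable V (\<lambda>a. levy_kernel \<omega> (- a))"
proof -
  define w where "w a = (\<omega>\<^sup>2 + 2) * (indicator {a. \<bar>a\<bar> < 1} a * \<bar>a\<bar> powr r2
      + indicator {a. 1 \<le> \<bar>a\<bar>} a * \<bar>a\<bar> powr r1)" for a :: real
  have int_w: "integrable V w"
    unfolding w_def using integrable_small_moment integrable_large_moment by simp
  have bound: "cmod (levy_kernel \<omega> a) \<le> w a" for a
    unfolding w_def using norm_levy_kernel_le exponents by simp
  have w_even: "w (- a) = w a" for a
    by (simp add: w_def indicator_def)
  show "integrable V (levy_kernel \<omega>)"
    by (rule Bochner_Integration.integrable_bound[OF int_w borel_measurable_V[OF borel_measurable_levy_kernel]])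
       (use bound in \<open>auto intro: order_trans[OF _ abs_ge_self]\<close>)
  show "integrable V (\<lambda>a. levy_kernel \<omega> (- a))"
    by (rule Bochner_Integration.integrable_bound[OF int_w borel_measurable_V])
       (use bound[of "- _"] w_even in \<open>auto intro: order_trans[OF _ abs_ge_self] measurable_compose[OF _ borel_measurable_levy_kernel]\<close>)
qed

lemma kernel_majorant_integral:
  "integrable V (kernel_majorant r1 r2 x y)"
  "(LINT a|V. kernel_majorant r1 r2 x y a)
     = 4 * (small_moment * mixed_powr r2 x y + large_moment * mixed_powr r1 x y)"
proof -
  have majorant_eq: "kernel_majorant r1 r2 x y = (\<lambda>a.
      4 * (indicator {a. \<bar>a\<bar> < 1} a * \<bar>a\<bar> powr r2 * mixed_powr r2 x y
      + indicator {a. 1 \<le> \<bar>a\<bar>} a * \<bar>a\<bar> powr r1 * mixed_powr r1 x y))"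
    by (simp add: fun_eq_iff kernel_majorant_def mixed_powr_mult_right mult.assoc)
  show "integrable V (kernel_majorant r1 r2 x y)"
    unfolding majorant_eq using integrable_small_moment integrable_large_moment by simp
  show "(LINT a|V. kernel_majorant r1 r2 x y a)
     = 4 * (small_moment * mixed_powr r2 x y + large_moment * mixed_powr r1 x y)"
    unfolding majorant_eq small_moment_def large_moment_def
    using integrable_small_moment integrable_large_moment by simp
qed

lemma levy_exponent_kernel_representation:
  obtains h :: "real \<Rightarrow> real \<Rightarrow> complex"
  where "\<And>\<omega>. integrable V (h \<omega>)" "\<And>\<omega>. levy_exponent V \<omega> = (LINT a|V. h \<omega> a)"
    and "\<And>x y a. cmod (h x a - h y a) \<le> kernel_majorant r1 r2 x y a"
proof (cases "r1 \<le> 1 \<and> 1 \<le> r2")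
  case True
  show thesis
    using exponents True
    by (intro that[of levy_kernel] integrable_levy_kernel levy_exponent_eq_integral_kernel
        norm_levy_kernel_diff_le) auto
next
  case False
  then have symmetric: "symmetric_measure V" using symmetric_or_straddles_one by blast
  define h where "h \<omega> a = complex_of_real (cos (\<omega> * a) - 1)" for \<omega> a
  have h_eq: "h \<omega> = (\<lambda>a. (levy_kernel \<omega> a + levy_kernel \<omega> (- a)) / 2)" for \<omega>
    by (simp add: fun_eq_iff h_def levy_kernel_add_reflect)
  have "integrable V (h \<omega>)" for \<omega>
    unfolding h_eq using integrable_levy_kernel by simp
  moreover have "levy_exponent V \<omega> = (LINT a|V. h \<omega> a)" for \<omega>
  proof -
    have "(LINT a|V. levy_kernel \<omega> (- a)) = (LINT a|V. levy_kernel \<omega> a)"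
      by (rule integral_reflect_symmetric_measure[OF symmetric sets_V borel_measurable_levy_kernel])
    then show ?thesis
      unfolding h_eq levy_exponent_eq_integral_kernel using integrable_levy_kernel by simp
  qed
  moreover have "cmod (h x a - h y a) \<le> kernel_majorant r1 r2 x y a" for x y a
    using abs_cos_diff_le_kernel_majorant[of r1 r2 x a y] exponents
    by (simp add: h_def flip: of_real_diff)
  ultimately show thesis by (rule that)
qed

lemma norm_levy_exponent_diff_le:
  "cmod (levy_exponent V x - levy_exponent V y)
     \<le> 4 * (small_moment * mixed_powr r2 x y + large_moment * mixed_powr r1 x y)"
proof -
  obtain h where h_int: "\<And>\<omega>. integrable V (h \<omega>)"
    and g_eq: "\<And>\<omega>. levy_exponent V \<omega> = (LINT a|V. h \<omega> a)"
    and h_diff: "\<And>x y a. cmod (h x a - h y a) \<le> kernel_majorant r1 r2 x y a"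
    using levy_exponent_kernel_representation by blast
  have "cmod (levy_exponent V x - levy_exponent V y) = cmod (LINT a|V. h x a - h y a)"
    using h_int by (simp add: g_eq)
  also have "\<dots> \<le> (LINT a|V. kernel_majorant r1 r2 x y a)"
    using h_int h_diff kernel_majorant_integral(1) by (intro Bochner_Integration.integral_norm_bound_integral) auto
  finally show ?thesis by (simp only: kernel_majorant_integral(2))
qed

lemma continuous_levy_exponent: "continuous_on UNIV (levy_exponent V)"
proof (intro continuous_at_imp_continuous_on ballI)
  fix x :: real
  define b where "b y = 4 * (small_moment * mixed_powr r2 y x + large_moment * mixed_powr r1 y x)" for y
  have "continuous_on UNIV b"
    unfolding b_def using exponents by (intro continuous_intros continuous_mixed_powr) auto
  then have "(b \<longlongrightarrow> b x) (at x)"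
    by (simp add: continuous_on_eq_continuous_at isCont_def)
  moreover have "b x = 0" by (simp add: b_def mixed_powr_def)
  ultimately have b_lim: "(b \<longlongrightarrow> 0) (at x)" by simp
  have "\<forall>y. norm (levy_exponent V y - levy_exponent V x) \<le> b y"
    unfolding b_def by (intro allI norm_levy_exponent_diff_le)
  then have "((\<lambda>y. levy_exponent V y - levy_exponent V x) \<longlongrightarrow> 0) (at x)"
    by (rule Lim_null_comparison[OF always_eventually b_lim])
  then show "isCont (levy_exponent V) x"
    by (simp add: isCont_def LIM_zero_iff)
qed

lemma norm_levy_exponent_le:
  "cmod (levy_exponent V z) \<le> 4 * (small_moment * \<bar>z\<bar> powr r2 + large_moment * \<bar>z\<bar> powr r1)"
proof -
  have "levy_exponent V 0 = 0"
    by (simp add: levy_exponent_eq_integral_kernel levy_kernel_def)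
  then show ?thesis
    using norm_levy_exponent_diff_le[of z 0] by (simp add: mixed_powr_right_zero)
qed

lemma integrable_levy_exponent_comp:
  fixes \<phi> :: "'a::euclidean_space \<Rightarrow> real"
  assumes "\<phi> \<in> Lp_space r1 \<inter> Lp_space r2"
  shows "integrable lebesgue (\<lambda>x. levy_exponent V (\<phi> x))"
proof (rule Bochner_Integration.integrable_bound)
  have [measurable]: "\<phi> \<in> borel_measurable lebesgue" using assms by (simp add: Lp_space_def)
  show "integrable lebesgue (\<lambda>x. 4 * (small_moment * \<bar>\<phi> x\<bar> powr r2 + large_moment * \<bar>\<phi> x\<bar> powr r1))"
    using assms by (simp add: Lp_space_def)
  show "(\<lambda>x. levy_exponent V (\<phi> x)) \<in> borel_measurable lebesgue"
    using borel_measurable_continuous_onI[OF continuous_levy_exponent] by measurable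
  show "AE x in lebesgue. norm (levy_exponent V (\<phi> x))
          \<le> norm (4 * (small_moment * \<bar>\<phi> x\<bar> powr r2 + large_moment * \<bar>\<phi> x\<bar> powr r1))"
    using norm_levy_exponent_le by (auto intro: order_trans[OF _ abs_ge_self])
qed

lemma norm_G_functional_diff_le:
  fixes \<phi> \<psi> :: "'a::euclidean_space \<Rightarrow> real"
  assumes \<phi>: "\<phi> \<in> Lp_space r1 \<inter> Lp_space r2" and \<psi>: "\<psi> \<in> Lp_space r1 \<inter> Lp_space r2"
  shows "cmod (G_functional V \<phi> - G_functional V \<psi>)
           \<le> 8 * large_moment * H_dist r1 \<phi> \<psi> + 8 * small_moment * H_dist r2 \<phi> \<psi>"
proof -
  note mixed1 = integral_mixed_powr_le_H_dist[of \<phi> r1 \<psi>]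
    and mixed2 = integral_mixed_powr_le_H_dist[of \<phi> r2 \<psi>]
  have int1: "integrable lebesgue (\<lambda>x. mixed_powr r1 (\<phi> x) (\<psi> x))"
    and int2: "integrable lebesgue (\<lambda>x. mixed_powr r2 (\<phi> x) (\<psi> x))"
    using mixed1(1) mixed2(1) \<phi> \<psi> exponents by auto
  have "cmod (G_functional V \<phi> - G_functional V \<psi>)
      = cmod (LINT x|lebesgue. levy_exponent V (\<phi> x) - levy_exponent V (\<psi> x))"
    unfolding G_functional_def
    using integrable_levy_exponent_comp[OF \<phi>] integrable_levy_exponent_comp[OF \<psi>] by simp
  also have "\<dots> \<le> (LINT x|lebesgue. 4 * (small_moment * mixed_powr r2 (\<phi> x) (\<psi> x)
                                        + large_moment * mixed_powr r1 (\<phi> x) (\<psi> x)))"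
    using integrable_levy_exponent_comp[OF \<phi>] integrable_levy_exponent_comp[OF \<psi>] int1 int2
    by (intro Bochner_Integration.integral_norm_bound_integral norm_levy_exponent_diff_le) auto
  also have "\<dots> = 4 * (small_moment * (LINT x|lebesgue. mixed_powr r2 (\<phi> x) (\<psi> x))
                    + large_moment * (LINT x|lebesgue. mixed_powr r1 (\<phi> x) (\<psi> x)))"
    using int1 int2 by simp
  also have "\<dots> \<le> 4 * (small_moment * (2 * H_dist r2 \<phi> \<psi>) + large_moment * (2 * H_dist r1 \<phi> \<psi>))"
    using mixed1(2) mixed2(2) \<phi> \<psi> exponents moments_nonneg
    by (intro mult_left_mono add_mono) auto
  finally show ?thesis by (simp add: algebra_simps)
qed

end

lemma integrable_moments_of_M_class:
  fixes V :: "real measure"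
  assumes "V \<in> M_class p q"
  shows "integrable V (\<lambda>a. indicator {a. \<bar>a\<bar> < 1} a * \<bar>a\<bar> powr q)"
    and "integrable V (\<lambda>a. indicator {a. 1 \<le> \<bar>a\<bar>} a * \<bar>a\<bar> powr p)"
proof -
  have sets_V: "sets V = sets borel"
    using assms by (simp add: M_class_def radon_punctured_def)
  have [measurable]: "{a::real. \<bar>a\<bar> < 1} \<in> sets borel" "{a::real. 1 \<le> \<bar>a\<bar>} \<in> sets borel"
    by (intro borel_open borel_closed open_Collect_less closed_Collect_le continuous_intros)+
  have "(\<integral>\<^sup>+ a. ennreal (indicator {a. \<bar>a\<bar> < 1} a * \<bar>a\<bar> powr q) \<partial>V)
      = (\<integral>\<^sup>+ a. ennreal (indicator {a. 0 < \<bar>a\<bar> \<and> \<bar>a\<bar> < 1} a * \<bar>a\<bar> powr q) \<partial>V)"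
    by (rule nn_integral_cong) (auto simp: indicator_def)
  then show "integrable V (\<lambda>a. indicator {a. \<bar>a\<bar> < 1} a * \<bar>a\<bar> powr q)"
    using assms unfolding M_class_def
    by (intro integrableI_nonneg) (auto simp: measurable_cong_sets[OF sets_V refl])
  show "integrable V (\<lambda>a. indicator {a. 1 \<le> \<bar>a\<bar>} a * \<bar>a\<bar> powr p)"
    using assms unfolding M_class_def
    by (intro integrableI_nonneg) (auto simp: measurable_cong_sets[OF sets_V refl])
qed

theorem lemma3p14:
  fixes V :: "real measure" and p q :: real
  defines "A \<equiv> {p, q} \<union> (if symmetric_measure V then {} else {1})"
  assumes "levy_measure V"
    and "0 < p" and "p \<le> q" and "q \<le> 2"
    and "V \<in> M_class (Min A) (Max A)"
  shows "(\<forall>\<phi> \<in> (Lp_space (Min A) \<inter> Lp_space (Max A) :: ('a::euclidean_space \<Rightarrow> real) set).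
            integrable lebesgue (\<lambda>x. levy_exponent V (\<phi> x)))
       \<and> (\<exists>\<kappa>1 \<kappa>2. \<kappa>1 \<ge> 0 \<and> \<kappa>2 \<ge> 0 \<and>
            (\<forall>\<phi> \<in> (Lp_space (Min A) \<inter> Lp_space (Max A) :: ('a \<Rightarrow> real) set).
             \<forall>\<psi> \<in> Lp_space (Min A) \<inter> Lp_space (Max A).
               cmod (G_functional V \<phi> - G_functional V \<psi>)
                 \<le> \<kappa>1 * H_dist (Min A) \<phi> \<psi> + \<kappa>2 * H_dist (Max A) \<phi> \<psi>))"
proof -
  have A: "finite A" "A \<noteq> {}" "p \<in> A" and A_range: "\<forall>a\<in>A. 0 < a \<and> a \<le> 2"
    using assms(3-5) by (auto simp: A_def)
  have "Min A \<le> p" "p \<le> Max A" using A by auto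
  moreover have "symmetric_measure V \<or> (Min A \<le> 1 \<and> 1 \<le> Max A)"
    using A by (auto simp: A_def)
  moreover have "sets V = sets borel"
    using assms(2) by (simp add: levy_measure_def radon_punctured_def)
  ultimately interpret levy_moment_bounds V "Min A" "Max A"
    using A A_range integrable_moments_of_M_class[OF assms(6)]
    by unfold_locales auto
  show ?thesis
    using integrable_levy_exponent_comp norm_G_functional_diff_le moments_nonneg
    by (intro conjI ballI exI[of _ "8 * large_moment"] exI[of _ "8 * small_moment"]) auto
qed

end
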